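(* Let $A$ be a nonempty finite set, $\Sigma\in\mathbb{R}$, and let $\sigma$ be a $\Sigma$-proximity on $A$. Then the function $d:A^2\to\mathbb{R}$ defined by $$d(x,y)=\tfrac12\big(\sigma(x,x)+\sigma(y,y)\big)-\sigma(x,y)$$ is a metric on $A$.
   Context: A metric on $A$ is a function $d:A^2\to\mathbb{R}$ such that for all $x,y,z\in A$: $d(x,y)=0$ iff $x=y$, and $d(x,y)+d(x,z)-d(y,z)\ge 0$. A function $\sigma:A^2\to\mathbb{R}$ is a $\Sigma$-proximity on $A$ if for all $x,y,z\in A$: (1) $\sum_{t\in A}\sigma(x,t)=\Sigma$; (2) $\sigma(x,y)+\sigma(x,z)-\sigma(y,z)\le\sigma(x,x)$, with strict inequality whenever $z=y$ and $x\ne y$. *)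

theory Defs
  imports Main "HOL.Real"
begin

definition metric_on :: "'a set \<Rightarrow> ('a \<Rightarrow> 'a \<Rightarrow> real) \<Rightarrow> bool" where
  "metric_on A d \<longleftrightarrow>
     (\<forall>x\<in>A. \<forall>y\<in>A. d x y = 0 \<longleftrightarrow> x = y) \<and>
     (\<forall>x\<in>A. \<forall>y\<in>A. \<forall>z\<in>A. d x y + d x z - d y z \<ge> 0)"

definition proximity_on :: "'a set \<Rightarrow> real \<Rightarrow> ('a \<Rightarrow> 'a \<Rightarrow> real) \<Rightarrow> bool" where
  "proximity_on A \<Sigma> \<sigma> \<longleftrightarrow>
     (\<forall>x\<in>A. (\<Sum>t\<in>A. \<sigma> x t) = \<Sigma>) \<and>
     (\<forall>x\<in>A. \<forall>y\<in>A. \<forall>z\<in>A. \<sigma> x y + \<sigma> x z - \<sigma> y z \<le> \<sigma> x x) \<and>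
     (\<forall>x\<in>A. \<forall>y\<in>A. x \<noteq> y \<longrightarrow> \<sigma> x y + \<sigma> x y - \<sigma> y y < \<sigma> x x)"

end

theory Submission
  imports Defs
begin

lemma proximity_distance_triangle_excess:
  fixes \<sigma> :: "'a \<Rightarrow> 'a \<Rightarrow> real"
  defines "d \<equiv> \<lambda>x y. (\<sigma> x x + \<sigma> y y) / 2 - \<sigma> x y"
  shows "d x y + d x z - d y z = \<sigma> x x - (\<sigma> x y + \<sigma> x z - \<sigma> y z)"
  unfolding d_def by (simp add: field_simps)

theorem proposition3:
  fixes A :: "'a set" and \<Sigma> :: real and \<sigma> :: "'a \<Rightarrow> 'a \<Rightarrow> real"
  assumes "finite A" and "A \<noteq> {}"
    and "proximity_on A \<Sigma> \<sigma>"
  shows "metric_on A (\<lambda>x y. (\<sigma> x x + \<sigma> y y) / 2 - \<sigma> x y)"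
proof -
  have triangle: "\<sigma> x y + \<sigma> x z - \<sigma> y z \<le> \<sigma> x x" if "x \<in> A" "y \<in> A" "z \<in> A" for x y z
    using assms(3) that unfolding proximity_on_def by blast
  have strict: "\<sigma> x y + \<sigma> x y - \<sigma> y y < \<sigma> x x" if "x \<in> A" "y \<in> A" "x \<noteq> y" for x y
    using assms(3) that unfolding proximity_on_def by blast
  show ?thesis
    unfolding metric_on_def
  proof (intro conjI ballI)
    fix x y assume "x \<in> A" "y \<in> A"
    then show "(\<sigma> x x + \<sigma> y y) / 2 - \<sigma> x y = 0 \<longleftrightarrow> x = y"
      using strict[of x y] by (cases "x = y") auto
  next
    fix x y z assume "x \<in> A" "y \<in> A" "z \<in> A"
    then show "(\<sigma> x x + \<sigma> y y) / 2 - \<sigma> x y + ((\<sigma> x x + \<sigma> z z) / 2 - \<sigma> x z)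
        - ((\<sigma> y y + \<sigma> z z) / 2 - \<sigma> y z) \<ge> 0"
      using triangle by (simp only: proximity_distance_triangle_excess[of \<sigma>]) simp
  qed
qed

end
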